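(* Let the setting, algorithm and notation be as described in the context. Assume $\tau\in(0,(1+\sqrt5)/2)$ and that for some $\alpha\in(\tau/\min(1+\tau,1+\tau^{-1}),1]$, \[ \widehat\Sigma_f+S\succeq0,\quad H_f\succeq0,\quad \tfrac12\widehat\Sigma_g+T\succeq0,\quad M_g\succ0 . \] For $k\ge1$ let $\hat x^k:=\frac1k\sum_{i=1}^k x^{i+1}$, $\hat y^k:=\frac1k\sum_{i=1}^k y^{i+1}$, $\hat z^k:=\frac1k\sum_{i=1}^k\tilde z^{i+1}$. Then for every $k\ge1$ and every $(x,y,z)\in\mathcal X\times\mathcal Y\times\mathcal Z$, \[ \big(p(\hat x^k)+q(\hat y^k)\big)-\big(p(x)+q(y)\big)+\langle\hat x^k-x,\nabla f(x)+Az\rangle+\langle\hat y^k-y,\nabla g(y)+Bz\rangle+\langle\hat z^k-z,-(A^*x+B^*y-c)\rangle\le\frac{\phi_1(x,y,z)+\big(1-\alpha\min(\tau,\tau^{-1})\big)\sigma\|r^1\|^2+\alpha\xi_1}{2k}. \]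
   Context: Let $\mathcal X,\mathcal Y,\mathcal Z$ be finite-dimensional real Euclidean spaces with inner products $\langle\cdot,\cdot\rangle$ and induced norms $\|\cdot\|$. Let $p:\mathcal X\to(-\infty,+\infty]$ and $q:\mathcal Y\to(-\infty,+\infty]$ be closed proper convex functions, and let $f:\mathcal X\to\mathbb R$, $g:\mathcal Y\to\mathbb R$ be convex differentiable functions with Lipschitz continuous gradients. Let $A:\mathcal Z\to\mathcal X$, $B:\mathcal Z\to\mathcal Y$ be linear maps with adjoints $A^*,B^*$, and $c\in\mathcal Z$. Let $\Sigma_f,\widehat\Sigma_f$ (on $\mathcal X$) and $\Sigma_g,\widehat\Sigma_g$ (on $\mathcal Y$) be self-adjoint positive semidefinite linear operators with $\widehat\Sigma_f\succeq\Sigma_f$, $\widehat\Sigma_g\succeq\Sigma_g$, such that for all $x,x'\in\mathcal X$, $y,y'\in\mathcal Y$: $f(x')+\langle x-x',\nabla f(x')\rangle+\frac12\|x-x'\|^2_{\Sigma_f}\le f(x)\le f(x')+\langle x-x',\nabla f(x')\rangle+\frac12\|x-x'\|^2_{\widehat\Sigma_f}$ and the analogous two inequalities for $g$ with $\Sigma_g,\widehat\Sigma_g$. For a self-adjoint (possibly indefinite) operator $G$, $\|u\|_G^2:=\langle u,Gu\rangle$. Algorithm (Majorized iPADMM): let $\sigma>0$, $\tau>0$, and let $S:\mathcal X\to\mathcal X$, $T:\mathcal Y\to\mathcal Y$ be self-adjoint, possibly indefinite, linear operators with $\widehat\Sigma_f+S+\sigma AA^*\succeq0$ and $\widehat\Sigma_g+T+\sigma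 BB^*\succeq0$. Starting from $(x^0,y^0,z^0)\in\mathrm{dom}(p)\times\mathrm{dom}(q)\times\mathcal Z$, for $k=0,1,\dots$: $x^{k+1}\in\arg\min_{x}\{p(x)+\langle\nabla f(x^k),x\rangle+\frac12\|x-x^k\|^2_{\widehat\Sigma_f+S}+\langle z^k,A^*x\rangle+\frac\sigma2\|A^*x+B^*y^k-c\|^2\}$, $y^{k+1}\in\arg\min_{y}\{q(y)+\langle\nabla g(y^k),y\rangle+\frac12\|y-y^k\|^2_{\widehat\Sigma_g+T}+\langle z^k,B^*y\rangle+\frac\sigma2\|A^*x^{k+1}+B^*y-c\|^2\}$, $z^{k+1}=z^k+\tau\sigma(A^*x^{k+1}+B^*y^{k+1}-c)$ (the minimizers are assumed to exist). Notation: $r^k:=A^*x^k+B^*y^k-c$, $\tilde z^{k+1}:=z^k+\sigma r^{k+1}$; for $\alpha\in(0,1]$, $H_f:=\frac12\Sigma_f+S+\frac12(1-\alpha)\sigma AA^*$ and $M_g:=\frac12\Sigma_g+T+\min(\tau,1+\tau-\tau^2)\alpha\sigma BB^*$; $\phi_1(x,y,z):=(\tau\sigma)^{-1}\|z^1-z\|^2+\|x^1-x\|^2_{\widehat\Sigma_f+S}+\|y^1-y\|^2_{\widehat\Sigma_g+T}+\sigma\|A^*x+B^*y^1-c\|^2$; $\xi_1:=\|y^1-y^0\|^2_{\widehat\Sigma_g+T}$. *)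

theory Defs
  imports "HOL-Analysis.Analysis"
begin

definition ereal_convex :: "('a::real_vector \<Rightarrow> ereal) \<Rightarrow> bool" where
  "ereal_convex p \<longleftrightarrow>
     (\<forall>u v (t::real). 0 \<le> t \<and> t \<le> 1 \<longrightarrow>
        p ((1 - t) *\<^sub>R u + t *\<^sub>R v) \<le> ereal (1 - t) * p u + ereal t * p v)"

definition proper_fun :: "('a \<Rightarrow> ereal) \<Rightarrow> bool" where
  "proper_fun p \<longleftrightarrow> (\<forall>u. p u \<noteq> -\<infinity>) \<and> (\<exists>u. p u \<noteq> \<infinity>)"

definition closed_fun :: "('a::topological_space \<Rightarrow> ereal) \<Rightarrow> bool" where
  "closed_fun p \<longleftrightarrow> closed {(u, t::real). p u \<le> ereal t}"

definition closed_proper_convex :: "('a::real_normed_vector \<Rightarrow> ereal) \<Rightarrow> bool" where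
  "closed_proper_convex p \<longleftrightarrow> closed_fun p \<and> proper_fun p \<and> ereal_convex p"

definition self_adjoint :: "('a::real_inner \<Rightarrow> 'a) \<Rightarrow> bool" where
  "self_adjoint G \<longleftrightarrow> linear G \<and> (\<forall>u v. inner (G u) v = inner u (G v))"

definition qf :: "('a::real_inner \<Rightarrow> 'a) \<Rightarrow> 'a \<Rightarrow> real" where
  "qf G u = inner u (G u)"

definition psd :: "('a::real_inner \<Rightarrow> 'a) \<Rightarrow> bool" where
  "psd G \<longleftrightarrow> (\<forall>u. 0 \<le> qf G u)"

definition pd :: "('a::real_inner \<Rightarrow> 'a) \<Rightarrow> bool" where
  "pd G \<longleftrightarrow> (\<forall>u. u \<noteq> 0 \<longrightarrow> 0 < qf G u)"

definition smooth_convex :: "('a::euclidean_space \<Rightarrow> real) \<Rightarrow> ('a \<Rightarrow> 'a) \<Rightarrow> bool" where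
  "smooth_convex f df \<longleftrightarrow> convex_on UNIV f \<and>
     (\<forall>u. (f has_derivative (\<lambda>h. inner (df u) h)) (at u)) \<and>
     (\<exists>L. \<forall>u v. norm (df u - df v) \<le> L * norm (u - v))"

definition sandwich :: "('a::real_inner \<Rightarrow> real) \<Rightarrow> ('a \<Rightarrow> 'a) \<Rightarrow> ('a \<Rightarrow> 'a) \<Rightarrow> ('a \<Rightarrow> 'a) \<Rightarrow> bool" where
  "sandwich f df Sig Sighat \<longleftrightarrow>
     self_adjoint Sig \<and> self_adjoint Sighat \<and> psd Sig \<and> psd (\<lambda>u. Sighat u - Sig u) \<and>
     (\<forall>u v. f v + inner (u - v) (df v) + qf Sig (u - v) / 2 \<le> f u \<and>
            f u \<le> f v + inner (u - v) (df v) + qf Sighat (u - v) / 2)"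

end

theory Submission
  imports Defs
begin

text \<open>The optimality of \<open>x\<^sup>k\<^sup>+\<^sup>1\<close> and \<open>y\<^sup>k\<^sup>+\<^sup>1\<close> in their subproblems, written as
  variational inequalities, together with the majorization bounds for \<open>f\<close>, \<open>g\<close> and the
  multiplier update, bounds the contribution of iteration \<open>k\<close> to the gap by half the decrease of
  \<open>\<psi>\<^sub>k = \<phi>\<^sub>k + (1 - \<alpha> min(\<tau>, 1/\<tau>)) \<sigma> \<parallel>r\<^sup>k\<parallel>\<^sup>2 + \<alpha> \<parallel>y\<^sup>k - y\<^sup>k\<^sup>-\<^sup>1\<parallel>\<^sup>2\<close> (norm of \<open>\<Sigma>\<^sub>g^ + T\<close>).
  The cross terms between consecutive \<open>y\<close>-steps are controlled by the co-coercivity of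
  \<open>\<nabla>g\<close> relative to \<open>\<Sigma>\<^sub>g^\<close>, and the remaining quadratic terms by \<open>H\<^sub>f\<close>, \<open>M\<^sub>g\<close> and the choice
  of \<open>\<alpha>\<close>. Summing over \<open>1..k\<close> telescopes, and convexity of \<open>p\<close> and \<open>q\<close> passes to the
  ergodic averages.\<close>

lemma self_adjoint_add:
  "self_adjoint F \<Longrightarrow> self_adjoint G \<Longrightarrow> self_adjoint (\<lambda>u. F u + G u)"
  unfolding self_adjoint_def
  by (auto simp: inner_add_left inner_add_right intro: linear_compose_add)

lemma qf_add_scaleR:
  assumes "self_adjoint G"
  shows "qf G (a + t *\<^sub>R d) = qf G a + 2 * t * inner (G a) d + t\<^sup>2 * qf G d"
proof -
  have "linear G" and "inner a (G d) = inner (G a) d"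
    using assms by (simp_all add: self_adjoint_def)
  then show ?thesis
    unfolding qf_def
    by (simp add: linear_add linear_scale inner_add_left inner_add_right
        inner_commute[of d "G a"] power2_eq_square algebra_simps)
qed

lemma qf_add_scaled_adjoint:
  fixes A :: "'z::euclidean_space \<Rightarrow> 'x::euclidean_space"
  assumes "linear A"
  shows "qf (\<lambda>u. G u + t *\<^sub>R A (adjoint A u)) d = qf G d + t * (norm (adjoint A d))\<^sup>2"
  unfolding qf_def power2_norm_eq_inner
  by (simp add: inner_add_right adjoint_clauses(2)[OF assms, symmetric])

lemma pd_imp_psd: "pd G \<Longrightarrow> psd G"
  unfolding pd_def psd_def qf_def by (metis inner_zero_left less_imp_le order_refl)

lemma nonpos_if_le_small_multiples:
  fixes a Q :: real
  assumes "\<And>t. 0 < t \<Longrightarrow> t \<le> 1 \<Longrightarrow> a \<le> t * Q"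
  shows "a \<le> 0"
proof (rule ccontr)
  assume "\<not> a \<le> 0"
  hence a: "a > 0" by simp
  define t where "t = min 1 (a / (2 * (\<bar>Q\<bar> + 1)))"
  have t: "0 < t" "t \<le> 1" using a by (simp_all add: t_def)
  have "t * Q \<le> a / (2 * (\<bar>Q\<bar> + 1)) * \<bar>Q\<bar>"
  proof -
    have "t * Q \<le> t * \<bar>Q\<bar>" using t by (simp add: mult_left_mono)
    also have "\<dots> \<le> a / (2 * (\<bar>Q\<bar> + 1)) * \<bar>Q\<bar>" by (rule mult_right_mono) (auto simp: t_def)
    finally show ?thesis .
  qed
  also have "\<dots> < a"
  proof -
    have aQ: "0 \<le> a * \<bar>Q\<bar>" using a by simp
    show ?thesis using a by (simp add: field_simps) (use aQ a in linarith)
  qed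
  finally show False using assms[OF t] by simp
qed

lemma ereal_convex_minimizer_variational_ineq:
  fixes p :: "'a::real_vector \<Rightarrow> ereal"
  assumes cvx: "ereal_convex p" and pw: "p w = ereal Pw" and pu: "p u = ereal Pu"
    and min: "\<And>v. p w + ereal (h w) \<le> p v + ereal (h v)"
    and along_line: "\<And>t. h (w + t *\<^sub>R (u - w)) = h w + t * D + t\<^sup>2 * Q"
  shows "Pw \<le> Pu + D"
proof -
  have "Pw - Pu - D \<le> t * Q" if t: "0 < t" "t \<le> 1" for t
  proof -
    have "(1 - t) *\<^sub>R w + t *\<^sub>R u = w + t *\<^sub>R (u - w)" by (simp add: algebra_simps)
    moreover have "p ((1 - t) *\<^sub>R w + t *\<^sub>R u) \<le> ereal (1 - t) * p w + ereal t * p u"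
      using cvx t unfolding ereal_convex_def by auto
    ultimately have "p (w + t *\<^sub>R (u - w)) \<le> ereal (1 - t) * p w + ereal t * p u" by simp
    hence segment: "p (w + t *\<^sub>R (u - w)) \<le> ereal ((1 - t) * Pw + t * Pu)" using pw pu by simp
    have "ereal (Pw + h w) \<le> p (w + t *\<^sub>R (u - w)) + ereal (h (w + t *\<^sub>R (u - w)))"
      using min[of "w + t *\<^sub>R (u - w)"] pw by simp
    also have "\<dots> \<le> ereal ((1 - t) * Pw + t * Pu) + ereal (h (w + t *\<^sub>R (u - w)))"
      using segment by (rule add_right_mono)
    finally have "Pw + h w \<le> (1 - t) * Pw + t * Pu + h w + t * D + t\<^sup>2 * Q"
      by (simp add: along_line)
    hence "t * (Pw - Pu - D) \<le> t * (t * Q)"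
      by (simp add: algebra_simps power2_eq_square)
    thus ?thesis using t by simp
  qed
  then have "Pw - Pu - D \<le> 0" by (rule nonpos_if_le_small_multiples)
  then show ?thesis by simp
qed

lemma proximal_objective_along_line:
  assumes sa: "self_adjoint G" and L: "linear L"
  shows "inner a (w + t *\<^sub>R d) + qf G (w + t *\<^sub>R d - v0) / 2 + inner zz (L (w + t *\<^sub>R d))
           + \<sigma> / 2 * (norm (L (w + t *\<^sub>R d) + e))\<^sup>2
       = (inner a w + qf G (w - v0) / 2 + inner zz (L w) + \<sigma> / 2 * (norm (L w + e))\<^sup>2)
         + t * (inner a d + inner (G (w - v0)) d + inner zz (L d) + \<sigma> * inner (L w + e) (L d))
         + t\<^sup>2 * (qf G d / 2 + \<sigma> / 2 * (norm (L d))\<^sup>2)"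
proof -
  have q: "qf G (w + t *\<^sub>R d - v0) = qf G (w - v0) + 2 * t * inner (G (w - v0)) d + t\<^sup>2 * qf G d"
    using qf_add_scaleR[OF sa, of "w - v0" t d] by (simp add: algebra_simps)
  have n: "(norm (L (w + t *\<^sub>R d) + e))\<^sup>2
      = (norm (L w + e))\<^sup>2 + 2 * t * inner (L w + e) (L d) + t\<^sup>2 * (norm (L d))\<^sup>2"
    unfolding power2_norm_eq_inner
    by (simp add: linear_add[OF L] linear_scale[OF L] inner_add_left inner_add_right
        inner_commute power2_eq_square algebra_simps)
  show ?thesis unfolding q n
    by (simp add: linear_add[OF L] linear_scale[OF L] inner_add_right algebra_simps power2_eq_square)
qed

lemma proximal_step_variational_ineq:
  fixes p :: "'a::real_inner \<Rightarrow> ereal" and L :: "'a \<Rightarrow> 'c::real_inner"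
  assumes cvx: "ereal_convex p" and sa: "self_adjoint G" and L: "linear L"
    and pw: "p w = ereal Pw" and pu: "p u = ereal Pu"
    and min: "\<And>v. p w + ereal (inner a w + qf G (w - v0) / 2 + inner zz (L w) + \<sigma> / 2 * (norm (L w + e))\<^sup>2)
              \<le> p v + ereal (inner a v + qf G (v - v0) / 2 + inner zz (L v) + \<sigma> / 2 * (norm (L v + e))\<^sup>2)"
  shows "Pw \<le> Pu + (inner a (u - w) + inner (G (w - v0)) (u - w) + inner zz (L (u - w))
                    + \<sigma> * inner (L w + e) (L (u - w)))"
  by (rule ereal_convex_minimizer_variational_ineq[OF cvx pw pu min])
    (rule proximal_objective_along_line[OF sa L])

lemma sandwich_gradient_three_point:
  assumes s: "sandwich g dg Sg Sgh"
  shows "0 \<le> inner (dg b - dg a) (c - b) + qf Sgh (c - b - (b - a)) / 4"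
proof -
  define h where "h = (1/2) *\<^sub>R (c - b - (b - a))"
  have lower: "g v + inner (u - v) (dg v) \<le> g u" for u v
  proof -
    have "0 \<le> qf Sg (u - v)" using s by (simp add: sandwich_def psd_def)
    moreover have "g v + inner (u - v) (dg v) + qf Sg (u - v) / 2 \<le> g u"
      using s by (simp add: sandwich_def)
    ultimately show ?thesis by linarith
  qed
  have upper: "g u \<le> g v + inner (u - v) (dg v) + qf Sgh (u - v) / 2" for u v
    using s by (simp add: sandwich_def)
  have lin: "linear Sgh" using s by (simp add: sandwich_def self_adjoint_def)
  have "qf Sgh (- h) = qf Sgh h" by (simp add: qf_def linear_neg[OF lin])
  then have "g (a - h) \<le> g a + inner (- h) (dg a) + qf Sgh h / 2"
    using upper[where u = "a - h" and v = a] by simp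
  moreover have "g a + inner (b + h - a) (dg a) \<le> g (b + h)" by (rule lower)
  moreover have "g (b + h) \<le> g b + inner h (dg b) + qf Sgh h / 2"
    using upper[where u = "b + h" and v = b] by simp
  moreover have "g b + inner (a - h - b) (dg b) \<le> g (a - h)" by (rule lower)
  ultimately have "0 \<le> inner (dg b - dg a) (b - a + 2 *\<^sub>R h) + qf Sgh h"
    by (simp add: inner_diff_left inner_diff_right inner_add_left inner_add_right inner_commute
        algebra_simps)
  moreover have "b - a + 2 *\<^sub>R h = c - b" by (simp add: h_def algebra_simps)
  moreover have "qf Sgh h = qf Sgh (c - b - (b - a)) / 4"
    by (simp add: h_def qf_def linear_scale[OF lin])
  ultimately show ?thesis by simp
qed

lemma sandwich_three_point_descent:
  assumes s: "sandwich f df Sf Sfh" and S: "self_adjoint S"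
    and vi: "P1 \<le> PU + (inner (df x0) (u - x1) + inner (Sfh (x1 - x0) + S (x1 - x0)) (u - x1) + Z)"
  shows "P1 - PU + inner (x1 - u) (df u) \<le>
     (qf (\<lambda>w. Sfh w + S w) (x0 - u) - qf (\<lambda>w. Sfh w + S w) (x1 - u)) / 2
     - qf (\<lambda>w. (1/2) *\<^sub>R Sf w + S w) (x1 - x0) / 2 + Z"
proof -
  have F1: "f x1 \<le> f x0 + inner (x1 - x0) (df x0) + qf Sfh (x1 - x0) / 2"
    and F2: "f x0 + inner (u - x0) (df x0) + qf Sf (u - x0) / 2 \<le> f u"
    and F3: "f u + inner (x1 - u) (df u) + qf Sf (x1 - u) / 2 \<le> f x1"
    and nonneg: "0 \<le> qf Sf ((x1 - u) - (u - x0))"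
    using s by (simp_all add: sandwich_def psd_def)
  have lSf: "linear Sf" and lSfh: "linear Sfh" and lS: "linear S"
    using s S by (auto simp: sandwich_def self_adjoint_def)
  define e1 e0 where "e1 = x1 - u" and "e0 = x0 - u"
  then have x1: "x1 = u + e1" and x0: "x0 = u + e0" by simp_all
  have "inner e1 (Sf e0) = inner e0 (Sf e1)" "inner e1 (Sfh e0) = inner e0 (Sfh e1)"
    "inner e1 (S e0) = inner e0 (S e1)"
    using s S by (simp_all add: sandwich_def self_adjoint_def inner_commute)
  then show ?thesis using F1 F2 F3 nonneg vi unfolding x1 x0 qf_def
    by (simp add: linear_add[OF lSf] linear_diff[OF lSf] linear_add[OF lSfh] linear_diff[OF lSfh]
        linear_add[OF lS] linear_diff[OF lS] linear_neg[OF lSf] linear_neg[OF lS] linear_neg[OF lSfh]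
        linear_scale[OF lSf] inner_diff_left inner_diff_right inner_add_left inner_add_right
        inner_commute algebra_simps) argo
qed

lemma sandwich_consecutive_proximal_steps:
  assumes s: "sandwich g dg Sg Sgh" and T: "self_adjoint T"
    and half_psd: "psd (\<lambda>v. (1/2) *\<^sub>R Sgh v + T v)"
    and vi: "0 \<le> inner (dg y0) (y0 - y1) + inner (Sgh (y1 - y0) + T (y1 - y0)) (y0 - y1)
              + inner (dg ym) (y1 - y0) + inner (Sgh (y0 - ym) + T (y0 - ym)) (y1 - y0) + Z"
  shows "- Z \<le> (qf (\<lambda>w. Sgh w + T w) (y0 - ym) - qf (\<lambda>w. Sgh w + T w) (y1 - y0)) / 2"
proof -
  have co: "0 \<le> inner (dg y0 - dg ym) (y1 - y0) + qf Sgh (y1 - y0 - (y0 - ym)) / 4"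
    by (rule sandwich_gradient_three_point[OF s])
  have ps: "0 \<le> qf (\<lambda>v. (1/2) *\<^sub>R Sgh v + T v) (y1 - y0 - (y0 - ym))"
    using half_psd by (simp add: psd_def)
  have lG: "linear Sgh" and lT: "linear T"
    using s T by (simp_all add: sandwich_def self_adjoint_def)
  define d1 d0 where "d1 = y1 - y0" and "d0 = y0 - ym"
  then have y1: "y1 = y0 + d1" and ym: "ym = y0 - d0" by simp_all
  have "inner d1 (Sgh d0) = inner d0 (Sgh d1)" "inner d1 (T d0) = inner d0 (T d1)"
    using s T by (simp_all add: sandwich_def self_adjoint_def inner_commute)
  then show ?thesis using co ps vi unfolding y1 ym qf_def
    by (simp add: linear_add[OF lG] linear_diff[OF lG] linear_add[OF lT] linear_diff[OF lT]
        linear_neg[OF lG] linear_neg[OF lT] linear_scale[OF lG]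
        inner_diff_left inner_diff_right inner_add_left inner_add_right inner_commute algebra_simps) argo
qed

lemma multiplier_norm_identity:
  fixes z0 w R :: "'c::real_inner"
  assumes "\<tau> > 0" "\<sigma> > 0"
  shows "((norm (z0 - w))\<^sup>2 / (\<tau> * \<sigma>) - (norm (z0 + (\<tau> * \<sigma>) *\<^sub>R R - w))\<^sup>2 / (\<tau> * \<sigma>)) / 2
        = inner R (w - z0) - (\<tau> * \<sigma> / 2) * (norm R)\<^sup>2"
proof -
  have "(norm (z0 + (\<tau> * \<sigma>) *\<^sub>R R - w))\<^sup>2
      = (norm (z0 - w))\<^sup>2 + 2 * (\<tau> * \<sigma>) * inner (z0 - w) R + (\<tau> * \<sigma>)\<^sup>2 * (norm R)\<^sup>2"
    unfolding power2_norm_eq_inner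
    by (simp add: inner_add_left inner_add_right inner_diff_left inner_diff_right inner_commute
        algebra_simps power2_eq_square)
  then show ?thesis using assms
    by (simp add: field_simps power2_eq_square inner_diff_left inner_diff_right inner_commute)
qed

lemma multiplier_step_identity:
  fixes X1 U Y1 Y0 V c z0 w :: "'c::real_inner"
  assumes "\<tau> > 0" "\<sigma> > 0"
  shows "inner (X1 - U) w + inner (Y1 - V) w + inner (z0 + \<sigma> *\<^sub>R (X1 + Y1 - c) - w) (- (U + V - c))
      + (inner z0 (U - X1) + \<sigma> * inner (X1 + (Y0 - c)) (U - X1))
      + (inner z0 (V - Y1) + \<sigma> * inner (Y1 + (X1 - c)) (V - Y1))
    = ((norm (z0 - w))\<^sup>2 / (\<tau> * \<sigma>) - (norm (z0 + (\<tau> * \<sigma>) *\<^sub>R (X1 + Y1 - c) - w))\<^sup>2 / (\<tau> * \<sigma>)) / 2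
      + ((\<tau> - 2) * \<sigma> / 2) * (norm (X1 + Y1 - c))\<^sup>2
      + (\<sigma> / 2) * ((norm (U + Y0 - c))\<^sup>2 - (norm (U + Y1 - c))\<^sup>2)
      - (\<sigma> / 2) * (norm (Y1 - Y0))\<^sup>2 + \<sigma> * inner (X1 + Y1 - c) (Y1 - Y0)"
  unfolding multiplier_norm_identity[OF assms] unfolding power2_norm_eq_inner
  by (simp add: inner_add_left inner_add_right inner_diff_left inner_diff_right inner_commute
      algebra_simps) (simp add: field_simps)

lemma multiplier_cross_terms:
  fixes X1 X0 Y1 Y0 c z0 zm :: "'c::real_inner"
  assumes "z0 = zm + (\<tau> * \<sigma>) *\<^sub>R (X0 + Y0 - c)"
  shows "- (inner z0 (Y0 - Y1) + \<sigma> * inner (Y1 + (X1 - c)) (Y0 - Y1)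
           + inner zm (Y1 - Y0) + \<sigma> * inner (Y0 + (X0 - c)) (Y1 - Y0))
       = \<sigma> * inner (X1 + Y1 - c) (Y1 - Y0) + (\<tau> - 1) * \<sigma> * inner (X0 + Y0 - c) (Y1 - Y0)"
  unfolding assms
  by (simp add: inner_add_left inner_add_right inner_diff_left inner_diff_right inner_commute
      algebra_simps)

text \<open>This is where the lower bound on \<open>\<alpha>\<close> enters: it makes the coefficient of \<open>\<parallel>P\<parallel>\<^sup>2\<close> in the
  sum-of-squares decompositions below nonnegative.\<close>

lemma dual_step_quadratic_bound_small_tau:
  fixes P Q b :: "'c::real_inner"
  assumes \<tau>: "0 < \<tau>" "\<tau> \<le> 1" and \<sigma>: "0 < \<sigma>" and \<alpha>: "\<alpha> \<le> 1" "\<tau> < \<alpha> * (1 + \<tau>)"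
  shows "((\<tau> - 2) * \<sigma> / 2) * (norm P)\<^sup>2 - (\<sigma> / 2) * (norm b)\<^sup>2 + \<sigma> * inner P b
        + ((1 - \<alpha>) * \<sigma> / 4) * (norm (P - Q - b))\<^sup>2 + (\<tau> * \<alpha> * \<sigma> / 2) * (norm b)\<^sup>2
      \<le> ((1 - \<alpha> * \<tau>) * \<sigma> / 2) * ((norm Q)\<^sup>2 - (norm P)\<^sup>2)
        + \<alpha> * (\<sigma> * inner P b + (\<tau> - 1) * \<sigma> * inner Q b)"
proof -
  have "0 < \<alpha> * (1 + \<tau>)" using \<tau> \<alpha> by linarith
  then have "0 < \<alpha>" using \<tau> by (simp add: zero_less_mult_iff)
  then have "0 \<le> ((1 - \<alpha>) * \<sigma> / 4) * (norm (Q + P - b))\<^sup>2 + (\<alpha> * \<sigma> * (1 - \<tau>) / 2) * (norm (Q - b))\<^sup>2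
       + (\<sigma> / 2 * (\<alpha> * (1 + \<tau>) - \<tau>)) * (norm P)\<^sup>2"
    using \<tau> \<sigma> \<alpha> by (intro add_nonneg_nonneg mult_nonneg_nonneg) simp_all
  also have "\<dots> = ((1 - \<alpha> * \<tau>) * \<sigma> / 2) * ((norm Q)\<^sup>2 - (norm P)\<^sup>2)
        + \<alpha> * (\<sigma> * inner P b + (\<tau> - 1) * \<sigma> * inner Q b)
      - (((\<tau> - 2) * \<sigma> / 2) * (norm P)\<^sup>2 - (\<sigma> / 2) * (norm b)\<^sup>2 + \<sigma> * inner P b
        + ((1 - \<alpha>) * \<sigma> / 4) * (norm (P - Q - b))\<^sup>2 + (\<tau> * \<alpha> * \<sigma> / 2) * (norm b)\<^sup>2)"
    unfolding power2_norm_eq_inner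
    by (simp add: inner_add_left inner_add_right inner_diff_left inner_diff_right inner_commute
        algebra_simps) (simp add: field_simps)
  finally show ?thesis by simp
qed

lemma dual_step_quadratic_bound_large_tau:
  fixes P Q b :: "'c::real_inner"
  assumes \<tau>: "1 < \<tau>" and \<sigma>: "0 < \<sigma>" and \<alpha>: "\<alpha> \<le> 1" "\<tau> < \<alpha> * (1 + 1 / \<tau>)"
  shows "((\<tau> - 2) * \<sigma> / 2) * (norm P)\<^sup>2 - (\<sigma> / 2) * (norm b)\<^sup>2 + \<sigma> * inner P b
        + ((1 - \<alpha>) * \<sigma> / 4) * (norm (P - Q - b))\<^sup>2
        + ((1 + \<tau> - \<tau>\<^sup>2) * \<alpha> * \<sigma> / 2) * (norm b)\<^sup>2
      \<le> ((1 - \<alpha> * (1 / \<tau>)) * \<sigma> / 2) * ((norm Q)\<^sup>2 - (norm P)\<^sup>2)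
        + \<alpha> * (\<sigma> * inner P b + (\<tau> - 1) * \<sigma> * inner Q b)"
proof -
  have "0 < \<alpha> * (1 + 1 / \<tau>)" using \<tau> \<alpha> by linarith
  moreover have "0 < 1 + 1 / \<tau>" using \<tau> by (simp add: add_pos_pos)
  ultimately have "0 < \<alpha>" by (simp add: zero_less_mult_iff)
  then have "0 \<le> ((1 - \<alpha>) * \<sigma> / 4) * (norm (Q + P - b))\<^sup>2
       + (\<alpha> * \<sigma> * (\<tau> - 1) / (2 * \<tau>)) * (norm (Q + \<tau> *\<^sub>R b))\<^sup>2
       + (\<sigma> / 2 * (\<alpha> * (1 + 1 / \<tau>) - \<tau>)) * (norm P)\<^sup>2"
    using \<tau> \<sigma> \<alpha> by (intro add_nonneg_nonneg mult_nonneg_nonneg) simp_all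
  also have "\<dots> = ((1 - \<alpha> * (1 / \<tau>)) * \<sigma> / 2) * ((norm Q)\<^sup>2 - (norm P)\<^sup>2)
        + \<alpha> * (\<sigma> * inner P b + (\<tau> - 1) * \<sigma> * inner Q b)
      - (((\<tau> - 2) * \<sigma> / 2) * (norm P)\<^sup>2 - (\<sigma> / 2) * (norm b)\<^sup>2 + \<sigma> * inner P b
        + ((1 - \<alpha>) * \<sigma> / 4) * (norm (P - Q - b))\<^sup>2
        + ((1 + \<tau> - \<tau>\<^sup>2) * \<alpha> * \<sigma> / 2) * (norm b)\<^sup>2)"
    using \<tau> unfolding power2_norm_eq_inner
    by (simp add: inner_add_left inner_add_right inner_diff_left inner_diff_right inner_commute
        algebra_simps power2_eq_square) (simp add: field_simps)
  finally show ?thesis by simp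
qed

lemma dual_step_quadratic_bound:
  fixes P Q b :: "'c::real_inner"
  assumes \<tau>: "0 < \<tau>" and \<sigma>: "0 < \<sigma>" and \<alpha>: "\<tau> / min (1 + \<tau>) (1 + 1 / \<tau>) < \<alpha>" "\<alpha> \<le> 1"
  shows "((\<tau> - 2) * \<sigma> / 2) * (norm P)\<^sup>2 - (\<sigma> / 2) * (norm b)\<^sup>2 + \<sigma> * inner P b
        + ((1 - \<alpha>) * \<sigma> / 4) * (norm (P - Q - b))\<^sup>2
        + (min \<tau> (1 + \<tau> - \<tau>\<^sup>2) * \<alpha> * \<sigma> / 2) * (norm b)\<^sup>2
      \<le> ((1 - \<alpha> * min \<tau> (1 / \<tau>)) * \<sigma> / 2) * ((norm Q)\<^sup>2 - (norm P)\<^sup>2)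
        + \<alpha> * (\<sigma> * inner P b + (\<tau> - 1) * \<sigma> * inner Q b)"
proof (cases "\<tau> \<le> 1")
  case True
  then have "\<tau> * \<tau> \<le> 1" using \<tau> by (simp add: mult_le_one)
  then have m: "min \<tau> (1 + \<tau> - \<tau>\<^sup>2) = \<tau>" "min \<tau> (1 / \<tau>) = \<tau>"
    "min (1 + \<tau>) (1 + 1 / \<tau>) = 1 + \<tau>"
    using True \<tau> by (auto simp: min_def field_simps power2_eq_square)
  have "\<tau> < \<alpha> * (1 + \<tau>)" using \<alpha>(1) \<tau> unfolding m(3) by (simp add: field_simps)
  then show ?thesis
    unfolding m(1,2) by (rule dual_step_quadratic_bound_small_tau[OF \<tau> True \<sigma> \<alpha>(2)])
next
  case False
  then have "1 < \<tau>" by simp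
  then have "1 < \<tau> * \<tau>" using less_1_mult by blast
  then have m: "min \<tau> (1 + \<tau> - \<tau>\<^sup>2) = 1 + \<tau> - \<tau>\<^sup>2" "min \<tau> (1 / \<tau>) = 1 / \<tau>"
    "min (1 + \<tau>) (1 + 1 / \<tau>) = 1 + 1 / \<tau>"
    using \<tau> by (auto simp: min_def field_simps power2_eq_square)
  have "\<tau> < \<alpha> * (1 + 1 / \<tau>)" using \<alpha>(1) \<tau> unfolding m(3) by (simp add: field_simps)
  with \<open>1 < \<tau>\<close> show ?thesis
    unfolding m(1,2) by (rule dual_step_quadratic_bound_large_tau[OF _ \<sigma> \<alpha>(2)])
qed

lemma ereal_convex_average:
  fixes p :: "'a::real_vector \<Rightarrow> ereal"
  assumes cvx: "ereal_convex p" and k: "k \<ge> 1"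
    and fin: "\<And>i. i \<in> {1..k} \<Longrightarrow> p (w i) = ereal (a i)"
  shows "p ((1 / real k) *\<^sub>R (\<Sum>i=1..k. w i)) \<le> ereal ((1 / real k) * (\<Sum>i=1..k. a i))"
  using k fin
proof (induction k rule: nat_induct_at_least)
  case base
  then show ?case by simp
next
  case (Suc n)
  define t where "t = 1 / real (Suc n)"
  have t: "0 \<le> t" "t \<le> 1" by (simp_all add: t_def)
  have n: "real n > 0" using Suc(1) by simp
  have IH: "p ((1 / real n) *\<^sub>R (\<Sum>i=1..n. w i)) \<le> ereal ((1 / real n) * (\<Sum>i=1..n. a i))"
    using Suc by auto
  have w: "(1 / real (Suc n)) *\<^sub>R (\<Sum>i=1..Suc n. w i)
      = (1 - t) *\<^sub>R ((1 / real n) *\<^sub>R (\<Sum>i=1..n. w i)) + t *\<^sub>R w (Suc n)"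
    using n by (simp add: t_def scaleR_add_right field_simps)
  have "(1 - t) * (1 / real n) = 1 / real (Suc n)" using n by (simp add: t_def field_simps)
  then have h: "(1 - t) * ((1 / real n) * (\<Sum>i=1..n. a i)) = (1 / real (Suc n)) * (\<Sum>i=1..n. a i)"
    by (metis mult.assoc)
  have "(\<Sum>i=1..Suc n. a i) = (\<Sum>i=1..n. a i) + a (Suc n)" by simp
  then have "(1 / real (Suc n)) * (\<Sum>i=1..Suc n. a i)
      = (1 / real (Suc n)) * (\<Sum>i=1..n. a i) + t * a (Suc n)"
    unfolding t_def by (simp only: distrib_left)
  with h have a: "(1 / real (Suc n)) * (\<Sum>i=1..Suc n. a i)
      = (1 - t) * ((1 / real n) * (\<Sum>i=1..n. a i)) + t * a (Suc n)"
    by simp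
  have "p ((1 / real (Suc n)) *\<^sub>R (\<Sum>i=1..Suc n. w i))
      \<le> ereal (1 - t) * p ((1 / real n) *\<^sub>R (\<Sum>i=1..n. w i)) + ereal t * p (w (Suc n))"
    unfolding w using cvx t unfolding ereal_convex_def by blast
  also have "\<dots> \<le> ereal (1 - t) * ereal ((1 / real n) * (\<Sum>i=1..n. a i)) + ereal t * p (w (Suc n))"
    by (intro add_right_mono ereal_mult_left_mono IH) (use t in simp)
  also have "\<dots> = ereal ((1 / real (Suc n)) * (\<Sum>i=1..Suc n. a i))"
    unfolding a using Suc.prems by simp
  finally show ?case .
qed

lemma inner_average_diff:
  fixes a :: "nat \<Rightarrow> 'a::real_inner"
  assumes "k \<ge> 1"
  shows "inner ((1 / real k) *\<^sub>R (\<Sum>i=1..k. a i) - u) d = (1 / real k) * (\<Sum>i=1..k. inner (a i - u) d)"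
  using assms by (simp add: inner_diff_left inner_sum_left sum_subtractf field_simps)

locale majorized_ipadmm =
  fixes p :: "'x::euclidean_space \<Rightarrow> ereal" and q :: "'y::euclidean_space \<Rightarrow> ereal"
    and f :: "'x \<Rightarrow> real" and g :: "'y \<Rightarrow> real"
    and df :: "'x \<Rightarrow> 'x" and dg :: "'y \<Rightarrow> 'y"
    and A :: "'z::euclidean_space \<Rightarrow> 'x" and B :: "'z \<Rightarrow> 'y" and c :: 'z
    and Sf Sfh S :: "'x \<Rightarrow> 'x" and Sg Sgh T :: "'y \<Rightarrow> 'y"
    and \<sigma> \<tau> \<alpha> :: real
    and x :: "nat \<Rightarrow> 'x" and y :: "nat \<Rightarrow> 'y" and z :: "nat \<Rightarrow> 'z"
  assumes p_convex: "ereal_convex p" and q_convex: "ereal_convex q"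
    and p_not_minf: "\<And>u. p u \<noteq> -\<infinity>" and q_not_minf: "\<And>v. q v \<noteq> -\<infinity>"
    and f_sandwich: "sandwich f df Sf Sfh" and g_sandwich: "sandwich g dg Sg Sgh"
    and A: "linear A" and B: "linear B"
    and \<sigma>: "\<sigma> > 0" and \<tau>: "\<tau> > 0"
    and S: "self_adjoint S" and T: "self_adjoint T"
    and x0: "p (x 0) \<noteq> \<infinity>" and y0: "q (y 0) \<noteq> \<infinity>"
    and x_step: "\<And>k u. p (x (Suc k)) + ereal (inner (df (x k)) (x (Suc k))
                  + qf (\<lambda>w. Sfh w + S w) (x (Suc k) - x k) / 2
                  + inner (z k) (adjoint A (x (Suc k)))
                  + \<sigma> / 2 * (norm (adjoint A (x (Suc k)) + adjoint B (y k) - c))\<^sup>2)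
               \<le> p u + ereal (inner (df (x k)) u
                  + qf (\<lambda>w. Sfh w + S w) (u - x k) / 2
                  + inner (z k) (adjoint A u)
                  + \<sigma> / 2 * (norm (adjoint A u + adjoint B (y k) - c))\<^sup>2)"
    and y_step: "\<And>k v. q (y (Suc k)) + ereal (inner (dg (y k)) (y (Suc k))
                  + qf (\<lambda>w. Sgh w + T w) (y (Suc k) - y k) / 2
                  + inner (z k) (adjoint B (y (Suc k)))
                  + \<sigma> / 2 * (norm (adjoint A (x (Suc k)) + adjoint B (y (Suc k)) - c))\<^sup>2)
               \<le> q v + ereal (inner (dg (y k)) v
                  + qf (\<lambda>w. Sgh w + T w) (v - y k) / 2
                  + inner (z k) (adjoint B v)
                  + \<sigma> / 2 * (norm (adjoint A (x (Suc k)) + adjoint B v - c))\<^sup>2)"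
    and z_step: "\<And>k. z (Suc k) = z k + (\<tau> * \<sigma>) *\<^sub>R
                  (adjoint A (x (Suc k)) + adjoint B (y (Suc k)) - c)"
    and \<alpha>: "\<tau> / min (1 + \<tau>) (1 + 1 / \<tau>) < \<alpha>" "\<alpha> \<le> 1"
    and Sfh_S: "psd (\<lambda>u. Sfh u + S u)"
    and Hf: "psd (\<lambda>u. (1/2) *\<^sub>R Sf u + S u + ((1 - \<alpha>) * \<sigma> / 2) *\<^sub>R A (adjoint A u))"
    and Sgh_T: "psd (\<lambda>v. (1/2) *\<^sub>R Sgh v + T v)"
    and Mg: "psd (\<lambda>v. (1/2) *\<^sub>R Sg v + T v
                + (min \<tau> (1 + \<tau> - \<tau>\<^sup>2) * \<alpha> * \<sigma>) *\<^sub>R B (adjoint B v))"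
begin

abbreviation residual :: "nat \<Rightarrow> 'z" where
  "residual j \<equiv> adjoint A (x j) + adjoint B (y j) - c"

definition px :: "nat \<Rightarrow> real" where
  "px k = real_of_ereal (p (x k))"

definition qy :: "nat \<Rightarrow> real" where
  "qy k = real_of_ereal (q (y k))"

lemma p_x_real: "p (x k) = ereal (px k)"
proof -
  have "p (x k) \<noteq> \<infinity>"
  proof (cases k)
    case (Suc j)
    obtain P0 where "p (x 0) = ereal P0" using x0 p_not_minf by (cases "p (x 0)") auto
    then show ?thesis using x_step[of j "x 0"] Suc by auto
  qed (use x0 in simp)
  then show ?thesis using p_not_minf[of "x k"] by (cases "p (x k)") (auto simp: px_def)
qed

lemma q_y_real: "q (y k) = ereal (qy k)"
proof -
  have "q (y k) \<noteq> \<infinity>"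
  proof (cases k)
    case (Suc j)
    obtain Q0 where "q (y 0) = ereal Q0" using y0 q_not_minf by (cases "q (y 0)") auto
    then show ?thesis using y_step[of j "y 0"] Suc by auto
  qed (use y0 in simp)
  then show ?thesis using q_not_minf[of "y k"] by (cases "q (y k)") (auto simp: qy_def)
qed

lemma x_step_variational_ineq:
  assumes "p a = ereal Pa"
  shows "px (Suc k) \<le> Pa + (inner (df (x k)) (a - x (Suc k))
      + inner (Sfh (x (Suc k) - x k) + S (x (Suc k) - x k)) (a - x (Suc k))
      + inner (z k) (adjoint A (a - x (Suc k)))
      + \<sigma> * inner (adjoint A (x (Suc k)) + (adjoint B (y k) - c)) (adjoint A (a - x (Suc k))))"
proof -
  have Sfh: "self_adjoint Sfh" using f_sandwich by (simp add: sandwich_def)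
  show ?thesis
    by (rule proximal_step_variational_ineq[OF p_convex self_adjoint_add[OF Sfh S]
          adjoint_linear[OF A] p_x_real assms])
      (unfold add_diff_eq, rule x_step)
qed

lemma y_step_variational_ineq:
  assumes "q b = ereal Qb"
  shows "qy (Suc k) \<le> Qb + (inner (dg (y k)) (b - y (Suc k))
      + inner (Sgh (y (Suc k) - y k) + T (y (Suc k) - y k)) (b - y (Suc k))
      + inner (z k) (adjoint B (b - y (Suc k)))
      + \<sigma> * inner (adjoint B (y (Suc k)) + (adjoint A (x (Suc k)) - c)) (adjoint B (b - y (Suc k))))"
proof -
  have Sgh: "self_adjoint Sgh" using g_sandwich by (simp add: sandwich_def)
  have swap: "b' + (a' - c) = a' + b' - c" for a' b' :: 'z by (simp add: algebra_simps)
  show ?thesis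
    by (rule proximal_step_variational_ineq[OF q_convex self_adjoint_add[OF Sgh T]
          adjoint_linear[OF B] q_y_real assms])
      (unfold swap, rule y_step)
qed

lemma alpha_pos: "0 < \<alpha>"
proof -
  have "0 < min (1 + \<tau>) (1 + 1 / \<tau>)" using \<tau> by (simp add: add_pos_pos)
  then have "0 < \<tau> / min (1 + \<tau>) (1 + 1 / \<tau>)" using \<tau> by simp
  then show ?thesis using \<alpha>(1) by linarith
qed

lemma x_three_point:
  assumes "p u = ereal Pu"
  shows "px (Suc k) - Pu + inner (x (Suc k) - u) (df u)
    \<le> (qf (\<lambda>w. Sfh w + S w) (x k - u) - qf (\<lambda>w. Sfh w + S w) (x (Suc k) - u)) / 2
       - qf (\<lambda>w. (1/2) *\<^sub>R Sf w + S w) (x (Suc k) - x k) / 2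
       + (inner (z k) (adjoint A u - adjoint A (x (Suc k)))
          + \<sigma> * inner (adjoint A (x (Suc k)) + (adjoint B (y k) - c))
                       (adjoint A u - adjoint A (x (Suc k))))"
  using x_step_variational_ineq[OF assms, of k]
  by (intro sandwich_three_point_descent[OF f_sandwich S])
    (simp only: add.assoc linear_diff[OF adjoint_linear[OF A]])

lemma y_three_point:
  assumes "q v = ereal Qv"
  shows "qy (Suc k) - Qv + inner (y (Suc k) - v) (dg v)
    \<le> (qf (\<lambda>w. Sgh w + T w) (y k - v) - qf (\<lambda>w. Sgh w + T w) (y (Suc k) - v)) / 2
       - qf (\<lambda>w. (1/2) *\<^sub>R Sg w + T w) (y (Suc k) - y k) / 2
       + (inner (z k) (adjoint B v - adjoint B (y (Suc k)))
          + \<sigma> * inner (adjoint B (y (Suc k)) + (adjoint A (x (Suc k)) - c))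
                       (adjoint B v - adjoint B (y (Suc k))))"
  using y_step_variational_ineq[OF assms, of k]
  by (intro sandwich_three_point_descent[OF g_sandwich T])
    (simp only: add.assoc linear_diff[OF adjoint_linear[OF B]])

lemma x_increment_bound:
  "- qf (\<lambda>w. (1/2) *\<^sub>R Sf w + S w) d / 2 \<le> ((1 - \<alpha>) * \<sigma> / 4) * (norm (adjoint A d))\<^sup>2"
  using Hf[unfolded psd_def qf_add_scaled_adjoint[OF A], rule_format, of d] by linarith

lemma y_increment_bound:
  "- qf (\<lambda>w. (1/2) *\<^sub>R Sg w + T w) d / 2
    \<le> (min \<tau> (1 + \<tau> - \<tau>\<^sup>2) * \<alpha> * \<sigma> / 2) * (norm (adjoint B d))\<^sup>2"
  using Mg[unfolded psd_def qf_add_scaled_adjoint[OF B], rule_format, of d]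
  by (simp add: field_simps)

lemma y_step_coupling:
  "\<sigma> * inner (residual (Suc (Suc j))) (adjoint B (y (Suc (Suc j))) - adjoint B (y (Suc j)))
     + (\<tau> - 1) * \<sigma> * inner (residual (Suc j)) (adjoint B (y (Suc (Suc j))) - adjoint B (y (Suc j)))
   \<le> (qf (\<lambda>w. Sgh w + T w) (y (Suc j) - y j)
       - qf (\<lambda>w. Sgh w + T w) (y (Suc (Suc j)) - y (Suc j))) / 2"
proof -
  let ?ym = "y j" and ?y0 = "y (Suc j)" and ?y1 = "y (Suc (Suc j))"
  let ?X0 = "adjoint A (x (Suc j))" and ?X1 = "adjoint A (x (Suc (Suc j)))"
    and ?Y0 = "adjoint B ?y0" and ?Y1 = "adjoint B ?y1"
  let ?Z = "inner (z (Suc j)) (?Y0 - ?Y1) + \<sigma> * inner (?Y1 + (?X1 - c)) (?Y0 - ?Y1)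
      + inner (z j) (?Y1 - ?Y0) + \<sigma> * inner (?Y0 + (?X0 - c)) (?Y1 - ?Y0)"
  have lB: "linear (adjoint B)" by (rule adjoint_linear[OF B])
  have "qy (Suc j) \<le> qy (Suc (Suc j)) + (inner (dg ?ym) (?y1 - ?y0)
      + inner (Sgh (?y0 - ?ym) + T (?y0 - ?ym)) (?y1 - ?y0)
      + inner (z j) (?Y1 - ?Y0) + \<sigma> * inner (?Y0 + (?X0 - c)) (?Y1 - ?Y0))"
    using y_step_variational_ineq[OF q_y_real[of "Suc (Suc j)"], of j] by (simp only: linear_diff[OF lB])
  moreover have "qy (Suc (Suc j)) \<le> qy (Suc j) + (inner (dg ?y0) (?y0 - ?y1)
      + inner (Sgh (?y1 - ?y0) + T (?y1 - ?y0)) (?y0 - ?y1)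
      + inner (z (Suc j)) (?Y0 - ?Y1) + \<sigma> * inner (?Y1 + (?X1 - c)) (?Y0 - ?Y1))"
    using y_step_variational_ineq[OF q_y_real[of "Suc j"], of "Suc j"] by (simp only: linear_diff[OF lB])
  ultimately have "0 \<le> inner (dg ?y0) (?y0 - ?y1) + inner (Sgh (?y1 - ?y0) + T (?y1 - ?y0)) (?y0 - ?y1)
      + inner (dg ?ym) (?y1 - ?y0) + inner (Sgh (?y0 - ?ym) + T (?y0 - ?ym)) (?y1 - ?y0) + ?Z"
    by argo
  then have "- ?Z \<le> (qf (\<lambda>w. Sgh w + T w) (?y0 - ?ym) - qf (\<lambda>w. Sgh w + T w) (?y1 - ?y0)) / 2"
    by (rule sandwich_consecutive_proximal_steps[OF g_sandwich T Sgh_T])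
  moreover have "- ?Z = \<sigma> * inner (?X1 + ?Y1 - c) (?Y1 - ?Y0) + (\<tau> - 1) * \<sigma> * inner (?X0 + ?Y0 - c) (?Y1 - ?Y0)"
    by (rule multiplier_cross_terms) (rule z_step)
  ultimately show ?thesis by simp
qed

text \<open>At \<open>i = 0\<close> the last term reads \<open>y 0 - y 0\<close> by truncated subtraction; only \<open>i \<ge> 1\<close> is used.\<close>

definition lyapunov :: "'x \<Rightarrow> 'y \<Rightarrow> 'z \<Rightarrow> nat \<Rightarrow> real" where
  "lyapunov u v w i = (norm (z i - w))\<^sup>2 / (\<tau> * \<sigma>)
     + qf (\<lambda>a. Sfh a + S a) (x i - u) + qf (\<lambda>b. Sgh b + T b) (y i - v)
     + \<sigma> * (norm (adjoint A u + adjoint B (y i) - c))\<^sup>2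
     + (1 - \<alpha> * min \<tau> (1 / \<tau>)) * \<sigma> * (norm (residual i))\<^sup>2
     + \<alpha> * qf (\<lambda>b. Sgh b + T b) (y i - y (i - 1))"

definition gap :: "real \<Rightarrow> real \<Rightarrow> 'x \<Rightarrow> 'y \<Rightarrow> 'z \<Rightarrow> nat \<Rightarrow> real" where
  "gap Pu Qv u v w i = px (Suc i) - Pu + (qy (Suc i) - Qv)
     + inner (x (Suc i) - u) (df u + A w) + inner (y (Suc i) - v) (dg v + B w)
     + inner (z i + \<sigma> *\<^sub>R residual (Suc i) - w) (- (adjoint A u + adjoint B v - c))"

lemma lyapunov_nonneg: "0 \<le> lyapunov u v w i"
proof -
  have Pg: "0 \<le> qf (\<lambda>b. Sgh b + T b) d" for d
  proof -
    have "0 \<le> qf (\<lambda>v. (1/2) *\<^sub>R Sgh v + T v) d" using Sgh_T by (simp add: psd_def)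
    moreover have "0 \<le> qf (\<lambda>u. Sgh u - Sg u) d" and "0 \<le> qf Sg d"
      using g_sandwich by (simp_all add: sandwich_def psd_def)
    ultimately show ?thesis unfolding qf_def by (simp add: inner_add_right inner_diff_right)
  qed
  have "\<alpha> * min \<tau> (1 / \<tau>) \<le> 1 * 1"
    using \<alpha>(2) alpha_pos \<tau> by (intro mult_mono) (auto simp: min_le_iff_disj)
  then show ?thesis
    unfolding lyapunov_def using Pg Sfh_S \<tau> \<sigma> alpha_pos
    by (intro add_nonneg_nonneg mult_nonneg_nonneg) (simp_all add: psd_def)
qed

lemma lyapunov_descent:
  assumes Pu: "p u = ereal Pu" and Qv: "q v = ereal Qv"
  shows "gap Pu Qv u v w (Suc j) \<le> (lyapunov u v w (Suc j) - lyapunov u v w (Suc (Suc j))) / 2"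
proof -
  let ?x0 = "x (Suc j)" and ?x1 = "x (Suc (Suc j))" and ?ym = "y j" and ?y0 = "y (Suc j)"
    and ?y1 = "y (Suc (Suc j))" and ?z0 = "z (Suc j)"
  let ?X0 = "adjoint A ?x0" and ?X1 = "adjoint A ?x1" and ?U = "adjoint A u"
    and ?Y0 = "adjoint B ?y0" and ?Y1 = "adjoint B ?y1" and ?V = "adjoint B v"
  let ?Pf = "\<lambda>w. Sfh w + S w" and ?Pg = "\<lambda>w. Sgh w + T w"
  have lA: "linear (adjoint A)" and lB: "linear (adjoint B)"
    using A B by (simp_all add: adjoint_linear)
  note x_part = x_three_point[OF Pu, of "Suc j"]
  note y_part = y_three_point[OF Qv, of "Suc j"]
  note multiplier = multiplier_step_identity[OF \<tau> \<sigma>, of ?X1 ?U w ?Y1 ?V ?z0 c ?Y0]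
  have x_inc: "- qf (\<lambda>w. (1/2) *\<^sub>R Sf w + S w) (?x1 - ?x0) / 2
      \<le> ((1 - \<alpha>) * \<sigma> / 4) * (norm (?X1 - ?X0))\<^sup>2"
    using x_increment_bound[of "?x1 - ?x0"] by (simp only: linear_diff[OF lA])
  have y_inc: "- qf (\<lambda>w. (1/2) *\<^sub>R Sg w + T w) (?y1 - ?y0) / 2
      \<le> (min \<tau> (1 + \<tau> - \<tau>\<^sup>2) * \<alpha> * \<sigma> / 2) * (norm (?Y1 - ?Y0))\<^sup>2"
    using y_increment_bound[of "?y1 - ?y0"] by (simp only: linear_diff[OF lB])
  have coupling: "\<alpha> * (\<sigma> * inner (?X1 + ?Y1 - c) (?Y1 - ?Y0) + (\<tau> - 1) * \<sigma> * inner (?X0 + ?Y0 - c) (?Y1 - ?Y0))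
      \<le> \<alpha> * ((qf ?Pg (?y0 - ?ym) - qf ?Pg (?y1 - ?y0)) / 2)"
    using y_step_coupling[of j] alpha_pos by (intro mult_left_mono) simp_all
  have "?X1 + ?Y1 - c - (?X0 + ?Y0 - c) - (?Y1 - ?Y0) = ?X1 - ?X0" by (simp add: algebra_simps)
  note dual = dual_step_quadratic_bound[OF \<tau> \<sigma> \<alpha>,
      of "?X1 + ?Y1 - c" "?Y1 - ?Y0" "?X0 + ?Y0 - c", unfolded this]
  have gap: "gap Pu Qv u v w (Suc j)
      = (px (Suc (Suc j)) - Pu + inner (?x1 - u) (df u)) + (qy (Suc (Suc j)) - Qv + inner (?y1 - v) (dg v))
        + (inner (?X1 - ?U) w + inner (?Y1 - ?V) w
           + inner (?z0 + \<sigma> *\<^sub>R (?X1 + ?Y1 - c) - w) (- (?U + ?V - c)))"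
    unfolding gap_def
    by (simp add: inner_add_right adjoint_clauses(2)[OF A, symmetric]
        adjoint_clauses(2)[OF B, symmetric] linear_diff[OF lA] linear_diff[OF lB] algebra_simps)
  have descent: "lyapunov u v w (Suc j) - lyapunov u v w (Suc (Suc j)) =
      ((norm (?z0 - w))\<^sup>2 / (\<tau> * \<sigma>) - (norm (?z0 + (\<tau> * \<sigma>) *\<^sub>R (?X1 + ?Y1 - c) - w))\<^sup>2 / (\<tau> * \<sigma>))
      + (qf ?Pf (?x0 - u) - qf ?Pf (?x1 - u)) + (qf ?Pg (?y0 - v) - qf ?Pg (?y1 - v))
      + \<sigma> * ((norm (?U + ?Y0 - c))\<^sup>2 - (norm (?U + ?Y1 - c))\<^sup>2)
      + \<alpha> * (qf ?Pg (?y0 - ?ym) - qf ?Pg (?y1 - ?y0))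
      + (1 - \<alpha> * min \<tau> (1 / \<tau>)) * \<sigma> * ((norm (?X0 + ?Y0 - c))\<^sup>2 - (norm (?X1 + ?Y1 - c))\<^sup>2)"
    unfolding lyapunov_def z_step[of "Suc j"] by (simp add: algebra_simps)
  show ?thesis
    unfolding gap descent using x_part y_part multiplier x_inc y_inc coupling dual by argo
qed

lemma sum_gap_le_lyapunov:
  assumes "p u = ereal Pu" and "q v = ereal Qv"
  shows "(\<Sum>i=1..n. gap Pu Qv u v w i) \<le> lyapunov u v w 1 / 2"
proof -
  have "(\<Sum>i=1..n. gap Pu Qv u v w i) \<le> (lyapunov u v w 1 - lyapunov u v w (Suc n)) / 2"
  proof (induction n)
    case (Suc n)
    then show ?case using lyapunov_descent[OF assms, where w = w and j = n] by simp
  qed simp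
  moreover have "0 \<le> lyapunov u v w (Suc n)" by (rule lyapunov_nonneg)
  ultimately show ?thesis by argo
qed

lemma ergodic_gap_bound:
  assumes k: "k \<ge> 1"
  shows "(p ((1 / real k) *\<^sub>R (\<Sum>i=1..k. x (Suc i))) + q ((1 / real k) *\<^sub>R (\<Sum>i=1..k. y (Suc i))))
      - (p u + q v)
      + ereal (inner ((1 / real k) *\<^sub>R (\<Sum>i=1..k. x (Suc i)) - u) (df u + A w)
        + inner ((1 / real k) *\<^sub>R (\<Sum>i=1..k. y (Suc i)) - v) (dg v + B w)
        + inner ((1 / real k) *\<^sub>R (\<Sum>i=1..k. z i + \<sigma> *\<^sub>R residual (Suc i)) - w)
            (- (adjoint A u + adjoint B v - c)))
    \<le> ereal (lyapunov u v w 1 / (2 * real k))"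
proof -
  let ?xh = "(1 / real k) *\<^sub>R (\<Sum>i=1..k. x (Suc i))"
    and ?yh = "(1 / real k) *\<^sub>R (\<Sum>i=1..k. y (Suc i))"
  let ?avg_px = "(1 / real k) * (\<Sum>i=1..k. px (Suc i))"
    and ?avg_qy = "(1 / real k) * (\<Sum>i=1..k. qy (Suc i))"
  have "p ?xh \<le> ereal ?avg_px" by (rule ereal_convex_average[OF p_convex k]) (rule p_x_real)
  then obtain PX where PX: "p ?xh = ereal PX" "PX \<le> ?avg_px"
    using p_not_minf[of ?xh] by (cases "p ?xh") auto
  have "q ?yh \<le> ereal ?avg_qy" by (rule ereal_convex_average[OF q_convex k]) (rule q_y_real)
  then obtain QY where QY: "q ?yh = ereal QY" "QY \<le> ?avg_qy"
    using q_not_minf[of ?yh] by (cases "q ?yh") auto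
  show ?thesis
  proof (cases "p u = \<infinity> \<or> q v = \<infinity>")
    case True
    then have infinite: "p u + q v = \<infinity>" using p_not_minf[of u] q_not_minf[of v] by auto
    show ?thesis unfolding PX QY infinite by simp
  next
    case False
    then obtain Pu Qv where Pu: "p u = ereal Pu" and Qv: "q v = ereal Qv"
      using p_not_minf[of u] q_not_minf[of v] by (cases "p u"; cases "q v") auto
    have "(1 / real k) * (\<Sum>i=1..k. gap Pu Qv u v w i) \<le> (1 / real k) * (lyapunov u v w 1 / 2)"
      using sum_gap_le_lyapunov[OF Pu Qv] k by (intro mult_left_mono) simp_all
    moreover have "(1 / real k) * (\<Sum>i=1..k. gap Pu Qv u v w i)
        = (?avg_px - Pu) + (?avg_qy - Qv)
          + (inner (?xh - u) (df u + A w) + inner (?yh - v) (dg v + B w)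
             + inner ((1 / real k) *\<^sub>R (\<Sum>i=1..k. z i + \<sigma> *\<^sub>R residual (Suc i)) - w)
                 (- (adjoint A u + adjoint B v - c)))"
      unfolding inner_average_diff[OF k] gap_def using k
      by (simp add: sum.distrib sum_subtractf field_simps)
    ultimately show ?thesis unfolding PX QY Pu Qv using PX(2) QY(2) by simp
  qed
qed

end

theorem lemma5p2:
  fixes p :: "'x::euclidean_space \<Rightarrow> ereal" and q :: "'y::euclidean_space \<Rightarrow> ereal"
    and f :: "'x \<Rightarrow> real" and g :: "'y \<Rightarrow> real"
    and df :: "'x \<Rightarrow> 'x" and dg :: "'y \<Rightarrow> 'y"
    and A :: "'z::euclidean_space \<Rightarrow> 'x" and B :: "'z \<Rightarrow> 'y" and c :: 'z
    and Sf Sfh S :: "'x \<Rightarrow> 'x" and Sg Sgh T :: "'y \<Rightarrow> 'y"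
    and \<sigma> \<tau> \<alpha> :: real
    and x :: "nat \<Rightarrow> 'x" and y :: "nat \<Rightarrow> 'y" and z :: "nat \<Rightarrow> 'z"
  assumes p: "closed_proper_convex p" and q: "closed_proper_convex q"
    and f: "smooth_convex f df" and g: "smooth_convex g dg"
    and fS: "sandwich f df Sf Sfh" and gS: "sandwich g dg Sg Sgh"
    and A: "linear A" and B: "linear B"
    and \<sigma>: "\<sigma> > 0" and \<tau>: "0 < \<tau>" "\<tau> < (1 + sqrt 5) / 2"
    and S: "self_adjoint S" and T: "self_adjoint T"
    and SA: "psd (\<lambda>u. Sfh u + S u + \<sigma> *\<^sub>R A (adjoint A u))"
    and TB: "psd (\<lambda>v. Sgh v + T v + \<sigma> *\<^sub>R B (adjoint B v))"
    and x0: "p (x 0) \<noteq> \<infinity>" and y0: "q (y 0) \<noteq> \<infinity>"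
    and xstep: "\<And>k u. p (x (Suc k)) + ereal (inner (df (x k)) (x (Suc k))
                  + qf (\<lambda>w. Sfh w + S w) (x (Suc k) - x k) / 2
                  + inner (z k) (adjoint A (x (Suc k)))
                  + \<sigma> / 2 * (norm (adjoint A (x (Suc k)) + adjoint B (y k) - c))\<^sup>2)
               \<le> p u + ereal (inner (df (x k)) u
                  + qf (\<lambda>w. Sfh w + S w) (u - x k) / 2
                  + inner (z k) (adjoint A u)
                  + \<sigma> / 2 * (norm (adjoint A u + adjoint B (y k) - c))\<^sup>2)"
    and ystep: "\<And>k v. q (y (Suc k)) + ereal (inner (dg (y k)) (y (Suc k))
                  + qf (\<lambda>w. Sgh w + T w) (y (Suc k) - y k) / 2
                  + inner (z k) (adjoint B (y (Suc k)))
                  + \<sigma> / 2 * (norm (adjoint A (x (Suc k)) + adjoint B (y (Suc k)) - c))\<^sup>2)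
               \<le> q v + ereal (inner (dg (y k)) v
                  + qf (\<lambda>w. Sgh w + T w) (v - y k) / 2
                  + inner (z k) (adjoint B v)
                  + \<sigma> / 2 * (norm (adjoint A (x (Suc k)) + adjoint B v - c))\<^sup>2)"
    and zstep: "\<And>k. z (Suc k) = z k + (\<tau> * \<sigma>) *\<^sub>R
                  (adjoint A (x (Suc k)) + adjoint B (y (Suc k)) - c)"
    and \<alpha>: "\<tau> / min (1 + \<tau>) (1 + 1 / \<tau>) < \<alpha>" "\<alpha> \<le> 1"
    and Sfh_S: "psd (\<lambda>u. Sfh u + S u)"
    and Hf: "psd (\<lambda>u. (1/2) *\<^sub>R Sf u + S u + ((1 - \<alpha>) * \<sigma> / 2) *\<^sub>R A (adjoint A u))"
    and Sgh_T: "psd (\<lambda>v. (1/2) *\<^sub>R Sgh v + T v)"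
    and Mg: "pd (\<lambda>v. (1/2) *\<^sub>R Sg v + T v
                + (min \<tau> (1 + \<tau> - \<tau>\<^sup>2) * \<alpha> * \<sigma>) *\<^sub>R B (adjoint B v))"
    and k: "k \<ge> (1::nat)"
  shows "let r = (\<lambda>j. adjoint A (x j) + adjoint B (y j) - c);
             zt = (\<lambda>j. z (j - 1) + \<sigma> *\<^sub>R r j);
             xh = (1 / real k) *\<^sub>R (\<Sum>i=1..k. x (i + 1));
             yh = (1 / real k) *\<^sub>R (\<Sum>i=1..k. y (i + 1));
             zh = (1 / real k) *\<^sub>R (\<Sum>i=1..k. zt (i + 1));
             \<phi>1 = (\<lambda>u v w. (norm (z 1 - w))\<^sup>2 / (\<tau> * \<sigma>)
                      + qf (\<lambda>a. Sfh a + S a) (x 1 - u)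
                      + qf (\<lambda>b. Sgh b + T b) (y 1 - v)
                      + \<sigma> * (norm (adjoint A u + adjoint B (y 1) - c))\<^sup>2);
             \<xi>1 = qf (\<lambda>b. Sgh b + T b) (y 1 - y 0)
         in \<forall>u v w.
              (p xh + q yh) - (p u + q v)
              + ereal (inner (xh - u) (df u + A w) + inner (yh - v) (dg v + B w)
                       + inner (zh - w) (- (adjoint A u + adjoint B v - c)))
              \<le> ereal ((\<phi>1 u v w + (1 - \<alpha> * min \<tau> (1 / \<tau>)) * \<sigma> * (norm (r 1))\<^sup>2 + \<alpha> * \<xi>1)
                       / (2 * real k))"
proof -
  have p': "ereal_convex p" "\<And>u. p u \<noteq> -\<infinity>" and q': "ereal_convex q" "\<And>v. q v \<noteq> -\<infinity>"
    using p q by (auto simp: closed_proper_convex_def proper_fun_def)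
  interpret majorized_ipadmm p q f g df dg A B c Sf Sfh S Sg Sgh T \<sigma> \<tau> \<alpha> x y z
    by (rule majorized_ipadmm.intro[OF p'(1) q'(1) p'(2) q'(2) fS gS A B \<sigma> \<tau>(1) S T x0 y0
          xstep ystep zstep \<alpha> Sfh_S Hf Sgh_T pd_imp_psd[OF Mg]])
  show ?thesis
    unfolding Let_def using ergodic_gap_bound[OF k] by (simp add: lyapunov_def)
qed

end
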